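(* Let $U$ be a connected coordinate domain with coordinates $(x^1,x^2)$ carrying a connection $\nabla$ whose Christoffel symbols satisfy $\Gamma_{ij}{}^k=\Gamma_{ij}{}^k(x^1)$, $\Gamma_{11}{}^1=0$, $\Gamma_{11}{}^2=0$ (so that $\partial_{x^2}$ is an affine Killing vector field). Let $\mathfrak{K}_{\mathbb{C}}$ denote the complex affine Killing vector fields on $U$ (complex-coefficient vector fields satisfying the affine Killing equations), $\mathfrak{K}$ the real ones, and for $\alpha\in\mathbb{C}$ set $\mathfrak{K}_\alpha:=\{X=e^{\alpha x^2}v(x^1)\partial_{x^2}:X\in\mathfrak{K}_{\mathbb{C}}\}$. (1) If there exists $X\in\mathfrak{K}_\alpha$ which is not a constant multiple of $\partial_{x^2}$, then $$\Gamma_{11}{}^1=0,\ \Gamma_{11}{}^2=0,\ \Gamma_{12}{}^1=0,\ \Gamma_{21}{}^1=0,\ \Gamma_{22}{}^1=0,\ \Gamma_{22}{}^2=-\alpha.\qquad(\ast)$$ (2) Suppose the Christoffel symbols satisfy $(\ast)$ for a given $\alpha$. Then: (a) if $u(x^1,x^2)\partial_{x^1}+w(x^1,x^2)\partial_{x^2}\in\mathfrak{K}_{\mathbb{C}}$, then (i) $\alpha\,\partial_{x^2}u+\partial_{x^2}^2u=0$ and (ii) $(\Gamma_{12}{}^2(x^1)+\Gamma_{21}{}^2(x^1))\partial_{x^1}w+\partial_{x^1}^2w=0$; (b) $\mathfrak{K}_\alpha=\{e^{\alpha x^2}v(x^1)\partial_{x^2}:(\Gamma_{12}{}^2(x^1)+\Gamma_{21}{}^2(x^1))v'(x^1)+v''(x^1)=0\}$;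 (c) if moreover $\alpha=0$ and $u(x^1,x^2)\partial_{x^1}+\{\sum_nw_n(x^1)(x^2)^n\}\partial_{x^2}\in\mathfrak{K}_{\mathbb{C}}$, then $w_n(x^1)\partial_{x^2}\in\mathfrak{K}_0$ for all $n$; furthermore $x^2\partial_{x^2}\in\mathfrak{K}$.
   Context: $\nabla_{\partial_{x^i}}\partial_{x^j}=\Gamma_{ij}{}^k\partial_{x^k}$ (torsion allowed). A vector field $X=a^k\partial_{x^k}$ (real or complex coefficients) is an affine Killing vector field iff for all $1\le i,j,k\le2$: $$0=\frac{\partial^2a^k}{\partial x^i\partial x^j}+\sum_\ell\Big\{a^\ell\frac{\partial\Gamma_{ij}{}^k}{\partial x^\ell}-\Gamma_{ij}{}^\ell\frac{\partial a^k}{\partial x^\ell}+\Gamma_{i\ell}{}^k\frac{\partial a^\ell}{\partial x^j}+\Gamma_{\ell j}{}^k\frac{\partial a^\ell}{\partial x^i}\Big\}.$$ *)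

theory Defs
  imports "HOL-Analysis.Analysis"
begin

text \<open>Points of the coordinate domain are pairs (x1, x2). Coefficient functions of
vector fields are complex valued. Coordinate indices are 1 and 2.\<close>

type_synonym cfun = "real \<times> real \<Rightarrow> complex"

text \<open>Vector field X = X 1 * d/dx1 + X 2 * d/dx2 (only indices 1, 2 matter).\<close>
type_synonym vfield = "nat \<Rightarrow> cfun"

definition pd_exists :: "nat \<Rightarrow> cfun \<Rightarrow> real \<times> real \<Rightarrow> bool" where
  "pd_exists i f p \<longleftrightarrow>
     (if i = 1 then (\<lambda>s. f (s, snd p)) differentiable (at (fst p))
      else (\<lambda>t. f (fst p, t)) differentiable (at (snd p)))"

definition pd :: "nat \<Rightarrow> cfun \<Rightarrow> cfun" where
  "pd i f p =
     (if i = 1 then vector_derivative (\<lambda>s. f (s, snd p)) (at (fst p))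
      else vector_derivative (\<lambda>t. f (fst p, t)) (at (snd p)))"

fun pds :: "nat list \<Rightarrow> cfun \<Rightarrow> cfun" where
  "pds [] f = f"
| "pds (i # is) f = pd i (pds is f)"

definition smooth_on :: "(real \<times> real) set \<Rightarrow> cfun \<Rightarrow> bool" where
  "smooth_on U f \<longleftrightarrow>
     (\<forall>is. set is \<subseteq> {1, 2} \<longrightarrow>
        continuous_on U (pds is f) \<and> (\<forall>i\<in>{1, 2}. \<forall>p\<in>U. pd_exists i (pds is f) p))"

definition Gc :: "(nat \<Rightarrow> nat \<Rightarrow> nat \<Rightarrow> real \<Rightarrow> real) \<Rightarrow> nat \<Rightarrow> nat \<Rightarrow> nat \<Rightarrow> cfun" where
  "Gc \<Gamma> i j k = (\<lambda>p. complex_of_real (\<Gamma> i j k (fst p)))"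

definition KC :: "(nat \<Rightarrow> nat \<Rightarrow> nat \<Rightarrow> real \<Rightarrow> real) \<Rightarrow> (real \<times> real) set \<Rightarrow> vfield set" where
  "KC \<Gamma> U = {X. smooth_on U (X 1) \<and> smooth_on U (X 2) \<and>
     (\<forall>p\<in>U. \<forall>i\<in>{1, 2}. \<forall>j\<in>{1, 2}. \<forall>k\<in>{1, 2}.
        pd i (pd j (X k)) p
        + (\<Sum>l\<in>{1, 2}. X l p * pd l (Gc \<Gamma> i j k) p
                        - Gc \<Gamma> i j l p * pd l (X k) p
                        + Gc \<Gamma> i l k p * pd j (X l) p
                        + Gc \<Gamma> l j k p * pd i (X l) p) = 0)}"

definition KR :: "(nat \<Rightarrow> nat \<Rightarrow> nat \<Rightarrow> real \<Rightarrow> real) \<Rightarrow> (real \<times> real) set \<Rightarrow> vfield set" where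
  "KR \<Gamma> U = {X \<in> KC \<Gamma> U. \<forall>k\<in>{1, 2}. \<forall>p\<in>U. X k p \<in> \<real>}"

definition Kalpha :: "(nat \<Rightarrow> nat \<Rightarrow> nat \<Rightarrow> real \<Rightarrow> real) \<Rightarrow> (real \<times> real) set \<Rightarrow> complex \<Rightarrow> vfield set" where
  "Kalpha \<Gamma> U \<alpha> = {X \<in> KC \<Gamma> U. \<exists>v :: real \<Rightarrow> complex.
      \<forall>p\<in>U. X 1 p = 0 \<and> X 2 p = exp (\<alpha> * complex_of_real (snd p)) * v (fst p)}"

definition vf :: "cfun \<Rightarrow> cfun \<Rightarrow> vfield" where
  "vf u w = (\<lambda>k. if k = 1 then u else w)"

definition star :: "(nat \<Rightarrow> nat \<Rightarrow> nat \<Rightarrow> real \<Rightarrow> real) \<Rightarrow> (real \<times> real) set \<Rightarrow> complex \<Rightarrow> bool" where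
  "star \<Gamma> U \<alpha> \<longleftrightarrow> (\<forall>p\<in>U.
      \<Gamma> 1 1 1 (fst p) = 0 \<and> \<Gamma> 1 1 2 (fst p) = 0 \<and> \<Gamma> 1 2 1 (fst p) = 0 \<and>
      \<Gamma> 2 1 1 (fst p) = 0 \<and> \<Gamma> 2 2 1 (fst p) = 0 \<and>
      complex_of_real (\<Gamma> 2 2 2 (fst p)) = - \<alpha>)"

end

theory Submission
  imports Defs "HOL-Complex_Analysis.Complex_Analysis"
begin

text \<open>
  For a vertical field \<open>X = exp (\<alpha> x2) v(x1) d/dx2\<close> the eight affine Killing equations
  become polynomial identities in the Christoffel symbols, \<open>\<alpha>\<close>, \<open>v\<close>, \<open>v'\<close> and \<open>v''\<close>.
  Since \<open>\<Gamma>_11^1 = \<Gamma>_11^2 = 0\<close>, equation (1,1,2) is the linear ODE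
  \<open>v'' + (\<Gamma>_12^2 + \<Gamma>_21^2) v' = 0\<close>, so on the connected set \<open>x1(U)\<close> either \<open>v'\<close> never
  vanishes or \<open>v\<close> is constant; unless \<open>X\<close> is a constant multiple of \<open>d/dx2\<close>, the other
  equations then force (*) pointwise.

  Under (*) the equations (2,2,1), (1,1,2) and (2,2,2) of a general field \<open>u d/dx1 + w d/dx2\<close>
  give (2a), and for vertical fields all equations collapse to the ODE for \<open>v\<close>, which is (2b).
  For \<open>\<alpha> = 0\<close> they also give \<open>d\<^sup>3w/dx2\<^sup>3 = 0\<close>: every slice \<open>w(s, -)\<close> is a quadratic
  polynomial, so by the identity theorem for power series each coefficient \<open>w_n\<close> is, near any
  point, a fixed linear combination of three slices \<open>w(-, t_j)\<close>. These satisfy the ODE by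
  (2a), hence so does \<open>w_n\<close>.
\<close>

section \<open>Smooth functions of one variable\<close>

definition vderiv :: "(real \<Rightarrow> complex) \<Rightarrow> real \<Rightarrow> complex" where
  "vderiv f = (\<lambda>s. vector_derivative f (at s))"

definition smooth1_on :: "real set \<Rightarrow> (real \<Rightarrow> complex) \<Rightarrow> bool" where
  "smooth1_on S f \<longleftrightarrow> (\<forall>n. \<forall>x\<in>S. (vderiv ^^ n) f differentiable (at x))"

lemma vderiv_funpow_Suc: "(vderiv ^^ Suc n) f x = vector_derivative ((vderiv ^^ n) f) (at x)"
  by (simp add: vderiv_def)

lemma vector_derivative_cong_open:
  assumes "open S" "x \<in> S" "\<And>s. s \<in> S \<Longrightarrow> f s = g s"
  shows "vector_derivative f (at x) = vector_derivative g (at x)"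
proof -
  have "eventually (\<lambda>s. s \<in> S) (nhds x)"
    by (rule eventually_nhds_in_open[OF assms(1,2)])
  then have "eventually (\<lambda>s. s \<in> UNIV \<longrightarrow> f s = g s) (nhds x)"
    by (rule eventually_mono) (simp add: assms(3))
  then show ?thesis
    by (rule vector_derivative_cong_eq) simp_all
qed

lemma differentiable_cong_open:
  fixes f g :: "real \<Rightarrow> complex"
  assumes "open S" "x \<in> S" "\<And>s. s \<in> S \<Longrightarrow> f s = g s"
  shows "f differentiable (at x) \<longleftrightarrow> g differentiable (at x)"
proof -
  have transfer: "k differentiable (at x)"
    if "h differentiable (at x)" "\<And>s. s \<in> S \<Longrightarrow> h s = k s" for h k :: "real \<Rightarrow> complex"
    using has_vector_derivative_transform_within_open[OF
        that(1)[unfolded vector_derivative_works] assms(1,2) that(2)]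
    by (rule differentiableI_vector)
  have "\<And>s. s \<in> S \<Longrightarrow> g s = f s"
    using assms(3) by simp
  then show ?thesis
    using transfer[of f g, OF _ assms(3)] transfer[of g f] by blast
qed

lemma vderiv_funpow_cong_open:
  assumes "open S" "\<And>s. s \<in> S \<Longrightarrow> f s = g s" "x \<in> S"
  shows "(vderiv ^^ n) f x = (vderiv ^^ n) g x"
  using assms(3)
proof (induction n arbitrary: x)
  case (Suc n)
  show ?case
    unfolding vderiv_funpow_Suc by (rule vector_derivative_cong_open[OF assms(1) Suc.prems Suc.IH])
qed (simp add: assms(2))

lemma smooth1_on_cong_open:
  assumes "open S" "\<And>s. s \<in> S \<Longrightarrow> f s = g s"
  shows "smooth1_on S f \<longleftrightarrow> smooth1_on S g"
proof -
  have "(vderiv ^^ n) f differentiable (at x) \<longleftrightarrow> (vderiv ^^ n) g differentiable (at x)"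
    if "x \<in> S" for n x
    by (rule differentiable_cong_open[OF assms(1) that vderiv_funpow_cong_open[OF assms]])
  then show ?thesis
    unfolding smooth1_on_def by blast
qed

lemma smooth1_on_has_vector_derivative:
  assumes "smooth1_on S f" "x \<in> S"
  shows "((vderiv ^^ n) f has_vector_derivative (vderiv ^^ Suc n) f x) (at x)"
proof -
  have "(vderiv ^^ n) f differentiable (at x)"
    using assms unfolding smooth1_on_def by blast
  then show ?thesis
    unfolding vderiv_funpow_Suc vector_derivative_works .
qed

lemma vderiv_funpow_vderiv: "(vderiv ^^ n) (vderiv f) = (vderiv ^^ Suc n) f"
  by (simp only: funpow_Suc_right o_apply)

lemma smooth1_on_vderiv: "smooth1_on S f \<Longrightarrow> smooth1_on S (vderiv f)"
  unfolding smooth1_on_def vderiv_funpow_vderiv by blast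

lemma vderiv_funpow_lincomb:
  assumes "open S" "smooth1_on S f" "smooth1_on S g" "x \<in> S"
  shows "(vderiv ^^ n) (\<lambda>s. a * f s + b * g s) x = a * (vderiv ^^ n) f x + b * (vderiv ^^ n) g x"
  using assms(4)
proof (induction n arbitrary: x)
  case (Suc n)
  have "(vderiv ^^ Suc n) (\<lambda>s. a * f s + b * g s) x
      = vector_derivative (\<lambda>s. a * (vderiv ^^ n) f s + b * (vderiv ^^ n) g s) (at x)"
    unfolding vderiv_funpow_Suc by (rule vector_derivative_cong_open[OF assms(1) Suc.prems Suc.IH])
  also have "\<dots> = a * (vderiv ^^ Suc n) f x + b * (vderiv ^^ Suc n) g x"
    using has_vector_derivative_add[OF
        has_vector_derivative_mult_right[OF smooth1_on_has_vector_derivative[OF assms(2) Suc.prems, of n], of a]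
        has_vector_derivative_mult_right[OF smooth1_on_has_vector_derivative[OF assms(3) Suc.prems, of n], of b]]
    by (rule vector_derivative_at)
  finally show ?case .
qed simp

lemma smooth1_on_lincomb:
  assumes "open S" "smooth1_on S f" "smooth1_on S g"
  shows "smooth1_on S (\<lambda>s. a * f s + b * g s)"
  unfolding smooth1_on_def
proof (intro allI ballI)
  fix n x assume x: "x \<in> S"
  have eq: "\<And>s. s \<in> S \<Longrightarrow>
      (vderiv ^^ n) (\<lambda>s. a * f s + b * g s) s = a * (vderiv ^^ n) f s + b * (vderiv ^^ n) g s"
    by (rule vderiv_funpow_lincomb[OF assms])
  have "(\<lambda>s. a * (vderiv ^^ n) f s + b * (vderiv ^^ n) g s) differentiable (at x)"
    using has_vector_derivative_add[OF
        has_vector_derivative_mult_right[OF smooth1_on_has_vector_derivative[OF assms(2) x, of n], of a]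
        has_vector_derivative_mult_right[OF smooth1_on_has_vector_derivative[OF assms(3) x, of n], of b]]
    by (rule differentiableI_vector)
  then show "(vderiv ^^ n) (\<lambda>s. a * f s + b * g s) differentiable (at x)"
    by (simp only: differentiable_cong_open[OF assms(1) x eq])
qed

lemma smooth1_on_cmult: "open S \<Longrightarrow> smooth1_on S f \<Longrightarrow> smooth1_on S (\<lambda>s. c * f s)"
  using smooth1_on_lincomb[of S f f c 0] by simp

lemma smooth1_on_locally: "(\<And>x. x \<in> S \<Longrightarrow> \<exists>A. x \<in> A \<and> smooth1_on A f) \<Longrightarrow> smooth1_on S f"
  unfolding smooth1_on_def by blast

lemma vderiv_funpow_const: "(vderiv ^^ Suc n) (\<lambda>_. c) = (\<lambda>_. 0)"
  by (induction n) (simp_all add: vderiv_def)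

lemma smooth1_on_const: "smooth1_on S (\<lambda>_. c)"
  unfolding smooth1_on_def
proof (intro allI ballI)
  fix n x
  show "(vderiv ^^ n) (\<lambda>_. c) differentiable (at x)"
    by (cases n) (simp_all only: vderiv_funpow_const funpow_0 differentiable_const)
qed

lemma vderiv_of_real: "vderiv complex_of_real = (\<lambda>_. 1)"
  unfolding vderiv_def
  by (intro ext vector_derivative_at) (auto intro!: derivative_eq_intros)

lemma smooth1_on_of_real: "smooth1_on S complex_of_real"
  unfolding smooth1_on_def
proof (intro allI ballI)
  fix n x
  show "(vderiv ^^ n) complex_of_real differentiable (at x)"
  proof (cases n)
    case 0
    then show ?thesis
      by (auto intro!: differentiableI_vector derivative_eq_intros)
  next
    case (Suc m)
    then have "(vderiv ^^ n) complex_of_real = (vderiv ^^ m) (\<lambda>_. 1)"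
      by (simp only: vderiv_funpow_vderiv[symmetric] vderiv_of_real)
    then show ?thesis
      by (cases m) (simp_all only: vderiv_funpow_const funpow_0 differentiable_const)
  qed
qed

lemma has_vector_derivative_exp_of_real:
  "((\<lambda>t. exp (\<alpha> * complex_of_real t)) has_vector_derivative \<alpha> * exp (\<alpha> * complex_of_real x)) (at x)"
  by (rule has_vector_derivative_real_field) (auto intro!: derivative_eq_intros)

lemma vderiv_funpow_exp:
  "(vderiv ^^ n) (\<lambda>t. exp (\<alpha> * complex_of_real t)) = (\<lambda>t. \<alpha> ^ n * exp (\<alpha> * complex_of_real t))"
proof (induction n)
  case (Suc n)
  have "vector_derivative (\<lambda>t. \<alpha> ^ n * exp (\<alpha> * complex_of_real t)) (at x)
      = \<alpha> ^ Suc n * exp (\<alpha> * complex_of_real x)" for x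
    using has_vector_derivative_mult_right[OF has_vector_derivative_exp_of_real, of "\<alpha> ^ n" \<alpha> x]
    by (simp add: vector_derivative_at mult.assoc)
  then show ?case
    by (simp add: vderiv_funpow_Suc Suc del: funpow.simps)
qed simp

lemma smooth1_on_exp: "smooth1_on S (\<lambda>t. exp (\<alpha> * complex_of_real t))"
  unfolding smooth1_on_def vderiv_funpow_exp
  using has_vector_derivative_mult_right[OF has_vector_derivative_exp_of_real]
  by (blast intro: differentiableI_vector)

lemma linear_ode_vanishing:
  fixes z g :: "real \<Rightarrow> complex"
  assumes P: "connected P" and g: "continuous_on P g"
    and z: "\<And>x. x \<in> P \<Longrightarrow> (z has_vector_derivative - g x * z x) (at x)"
    and x0: "x0 \<in> P" "z x0 = 0" and x1: "x1 \<in> P"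
  shows "z x1 = 0"
proof -
  define a where "a = min x0 x1"
  define b where "b = max x0 x1"
  have I: "{a..b} \<subseteq> P"
    using connected_contains_Icc[OF P] x0(1) x1 by (simp add: a_def b_def min_def max_def)
  define G where "G u = integral {a..u} g" for u
  have "((\<lambda>u. z u * exp (G u)) has_vector_derivative 0) (at u within {a..b})"
    if u: "u \<in> {a..b}" for u
  proof -
    have "(G has_vector_derivative g u) (at u within {a..b})"
      unfolding G_def using integral_has_vector_derivative[OF continuous_on_subset[OF g I] u] .
    from field_vector_diff_chain_within[OF this DERIV_exp[THEN has_field_derivative_at_within]]
    have E: "((\<lambda>u. exp (G u)) has_vector_derivative g u * exp (G u)) (at u within {a..b})"
      by (simp add: o_def)
    have Z: "(z has_vector_derivative - g u * z u) (at u within {a..b})"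
      using z[of u] I u by (blast intro: has_vector_derivative_at_within)
    have "z u * (g u * exp (G u)) + - g u * z u * exp (G u) = 0"
      by (simp add: algebra_simps)
    then show ?thesis
      using has_vector_derivative_mult[OF Z E] by simp
  qed
  then obtain c where c: "\<And>u. u \<in> {a..b} \<Longrightarrow> z u * exp (G u) = c"
    using has_vector_derivative_zero_constant[of "{a..b}" "\<lambda>u. z u * exp (G u)"] by blast
  have "x0 \<in> {a..b}" "x1 \<in> {a..b}"
    by (auto simp: a_def b_def)
  then have "z x1 * exp (G x1) = z x0 * exp (G x0)"
    using c by metis
  then show ?thesis
    using x0(2) by simp
qed

lemma vderiv_zero_imp_constant:
  fixes v :: "real \<Rightarrow> complex"
  assumes "connected P" "\<And>x. x \<in> P \<Longrightarrow> (v has_vector_derivative 0) (at x)" "x0 \<in> P" "x \<in> P"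
  shows "v x = v x0"
proof -
  have "((\<lambda>s. v s - v x0) has_vector_derivative - 0 * (v y - v x0)) (at y)" if "y \<in> P" for y
    using has_vector_derivative_diff[OF assms(2)[OF that] has_vector_derivative_const[of "v x0"]] by simp
  from linear_ode_vanishing[OF assms(1) continuous_on_const this assms(3) _ assms(4)]
  show ?thesis
    by simp
qed

lemma vderiv_funpow_zero_imp_polynomial:
  assumes T: "convex T" and F: "smooth1_on T F" and zero: "\<And>t. t \<in> T \<Longrightarrow> (vderiv ^^ n) F t = 0"
  shows "\<exists>c. \<forall>t\<in>T. F t = (\<Sum>i<n. c i * complex_of_real t ^ i)"
  using F zero
proof (induction n arbitrary: F)
  case (Suc n)
  have "(vderiv ^^ n) (vderiv F) t = 0" if "t \<in> T" for t
    using Suc.prems(2)[OF that] by (simp only: funpow_Suc_right o_apply)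
  then obtain c where c: "\<And>t. t \<in> T \<Longrightarrow> vderiv F t = (\<Sum>i<n. c i * complex_of_real t ^ i)"
    using Suc.IH[OF smooth1_on_vderiv[OF Suc.prems(1)]] by blast
  define P where "P t = (\<Sum>i<n. c i / of_nat (Suc i) * complex_of_real t ^ Suc i)" for t
  have P: "(P has_vector_derivative (\<Sum>i<n. c i * complex_of_real t ^ i)) (at t)" for t
    unfolding P_def
    by (rule has_vector_derivative_sum, rule has_vector_derivative_real_field,
        rule DERIV_cong[OF DERIV_cmult[OF DERIV_power[OF DERIV_ident]]])
      (simp add: field_simps del: of_nat_Suc)
  have "((\<lambda>t. F t - P t) has_vector_derivative 0) (at t within T)" if t: "t \<in> T" for t
    using has_vector_derivative_diff[OF smooth1_on_has_vector_derivative[OF Suc.prems(1) t, of 0] P]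
      c[OF t] by (simp add: vderiv_def has_vector_derivative_at_within)
  then obtain c0 where c0: "\<And>t. t \<in> T \<Longrightarrow> F t - P t = c0"
    using has_vector_derivative_zero_constant[of T "\<lambda>t. F t - P t"] T by blast
  have "F t = c0 + P t" if "t \<in> T" for t
    using c0[OF that] by (simp add: diff_eq_eq)
  moreover have "c0 + P t = (\<Sum>i<Suc n. (if i = 0 then c0 else c (i - 1) / of_nat i) * complex_of_real t ^ i)"
    for t
    unfolding sum.lessThan_Suc_shift by (simp add: P_def del: of_nat_Suc)
  ultimately show ?case
    by (intro exI[of _ "\<lambda>i. if i = 0 then c0 else c (i - 1) / of_nat i"]) simp
qed simp

lemma fps_eq_0_if_eval_fps_vanishes_on_ball:
  fixes E :: "complex fps"
  assumes R: "0 < R" and R_conv: "ereal R \<le> fps_conv_radius E"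
    and zero: "\<And>w. w \<in> ball 0 R \<Longrightarrow> eval_fps E w = 0"
  shows "E = 0"
proof -
  have "eventually (\<lambda>w. w \<in> ball 0 R) (nhds 0)"
    using R by (intro eventually_nhds_in_open) simp_all
  then have "eval_fps E has_fps_expansion 0"
    unfolding has_fps_expansion_def using zero by (auto elim!: eventually_mono)
  moreover have "eval_fps E has_fps_expansion E"
    using order.strict_trans2[OF _ R_conv, of 0] R
    by (intro eval_fps_has_fps_expansion) (simp add: zero_ereal_def)
  ultimately show ?thesis
    by (rule fps_expansion_unique_complex[rotated])
qed

lemma powser_zero_on_interval:
  fixes d :: "nat \<Rightarrow> complex"
  assumes ab: "a < b" and zero: "\<And>t. t \<in> {a..b} \<Longrightarrow> (\<lambda>m. d m * complex_of_real t ^ m) sums 0"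
  shows "d m = 0"
proof -
  define E where "E = Abs_fps d"
  define R where "R = max \<bar>a\<bar> \<bar>b\<bar>"
  have R: "0 < R"
    using ab by (auto simp: R_def)
  have conv: "ereal \<bar>t\<bar> \<le> fps_conv_radius E" if "t \<in> {a..b}" for t
    using conv_radius_geI[OF sums_summable[OF zero[OF that]]] by (simp add: fps_conv_radius_def E_def)
  have "ereal \<bar>a\<bar> \<le> fps_conv_radius E" "ereal \<bar>b\<bar> \<le> fps_conv_radius E"
    using conv ab by auto
  then have R_conv: "ereal R \<le> fps_conv_radius E"
    by (simp add: R_def max_def)
  have hol: "eval_fps E holomorphic_on ball 0 R"
  proof (intro holomorphic_on_eval_fps subsetI)
    fix w :: complex
    assume "w \<in> ball 0 R"
    then have "ereal (norm w) < ereal R"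
      by simp
    then show "w \<in> eball 0 (fps_conv_radius E)"
      using order.strict_trans2[OF _ R_conv] by simp
  qed
  define c where "c = (a + b) / 2"
  have sub: "complex_of_real ` {c<..<b} \<subseteq> ball 0 R"
    by (auto simp: R_def c_def)
  have lim: "complex_of_real c islimpt complex_of_real ` {c<..<b}"
  proof (rule islimpt_isCont_image)
    show "c islimpt {c<..<b}"
      using ab by (intro islimpt_greaterThanLessThan1) (simp add: c_def)
  qed (auto intro: continuous_intros simp: eventually_at_filter)
  have "eval_fps E w = 0" if "w \<in> ball 0 R" for w
  proof (rule analytic_continuation[OF hol open_ball connected_ball sub _ lim _ that])
    have "\<bar>c\<bar> < R"
      using ab by (auto simp: R_def c_def max_def abs_if)
    then show "complex_of_real c \<in> ball 0 R"
      by simp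
    show "eval_fps E z = 0" if "z \<in> complex_of_real ` {c<..<b}" for z
      using that zero sums_unique[of "\<lambda>m. d m * _ ^ m" 0]
      by (auto simp: eval_fps_def E_def c_def)
  qed
  then have "E = 0"
    by (rule fps_eq_0_if_eval_fps_vanishes_on_ball[OF R R_conv])
  then show ?thesis
    by (metis E_def fps_zero_nth Abs_fps_inverse UNIV_I mem_Collect_eq)
qed

lemma powser_eq_polynomial_on_interval:
  fixes d c :: "nat \<Rightarrow> complex"
  assumes "a < b" and sums: "\<And>t. t \<in> {a..b} \<Longrightarrow>
    (\<lambda>m. d m * complex_of_real t ^ m) sums (\<Sum>i<n. c i * complex_of_real t ^ i)"
  shows "d m = (if m < n then c m else 0)"
proof -
  have "(\<lambda>m. (d m - (if m < n then c m else 0)) * complex_of_real t ^ m) sums 0" if "t \<in> {a..b}" for t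
  proof -
    have "(\<lambda>m. (if m < n then c m else 0) * complex_of_real t ^ m) sums
        (\<Sum>m\<in>{..<n}. (if m < n then c m else 0) * complex_of_real t ^ m)"
      by (rule sums_finite) auto
    then have "(\<lambda>m. (if m < n then c m else 0) * complex_of_real t ^ m) sums
        (\<Sum>i<n. c i * complex_of_real t ^ i)"
      by simp
    from sums_diff[OF sums[OF that] this] show ?thesis
      by (simp add: left_diff_distrib)
  qed
  from powser_zero_on_interval[OF assms(1) this] show ?thesis
    by simp
qed

lemma sum_lessThan_3: "(\<Sum>i<(3::nat). f i) = f 0 + f 1 + (f 2 :: 'a :: comm_monoid_add)"
  by (simp add: eval_nat_numeral)

lemma quadratic_coeff_lincomb_of_values:
  fixes Y H :: complex
  assumes "H \<noteq> 0"
  shows "\<exists>l0 l1 l2. \<forall>c :: nat \<Rightarrow> complex. (if m < 3 then c m else 0) =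
    l0 * (\<Sum>i<3. c i * (Y - H) ^ i) + l1 * (\<Sum>i<3. c i * Y ^ i) + l2 * (\<Sum>i<3. c i * (Y + H) ^ i)"
proof -
  \<comment> \<open>The weights are those of Lagrange interpolation at the nodes \<open>Y - H\<close>, \<open>Y\<close>, \<open>Y + H\<close>.\<close>
  consider "m = 0" | "m = 1" | "m = 2" | "m \<ge> 3"
    by linarith
  then show ?thesis
  proof cases
    case 1
    show ?thesis
      by (intro exI[of _ "Y / (2*H) + Y^2 / (2*H^2)"] exI[of _ "1 - Y^2 / H^2"]
          exI[of _ "- Y / (2*H) + Y^2 / (2*H^2)"] allI)
        (use assms in \<open>simp add: 1 sum_lessThan_3 field_simps power2_eq_square\<close>)
  next
    case 2
    show ?thesis
      by (intro exI[of _ "- 1 / (2*H) - Y / H^2"] exI[of _ "2 * Y / H^2"] exI[of _ "1 / (2*H) - Y / H^2"] allI)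
        (use assms in \<open>simp add: 2 sum_lessThan_3 field_simps power2_eq_square\<close>)
  next
    case 3
    show ?thesis
      by (intro exI[of _ "1 / (2*H^2)"] exI[of _ "- 1 / H^2"] exI[of _ "1 / (2*H^2)"] allI)
        (use assms in \<open>simp add: 3 sum_lessThan_3 field_simps power2_eq_square\<close>)
  next
    case 4
    then show ?thesis
      by (intro exI[of _ 0]) simp
  qed
qed

section \<open>Partial derivatives on the plane\<close>

lemma open_slice_fst: "open U \<Longrightarrow> open {s::real. (s, y::real) \<in> U}"
  using continuous_open_vimage[of U "\<lambda>s. (s, y)"] by (simp add: vimage_def continuous_intros)

lemma open_slice_snd: "open U \<Longrightarrow> open {t::real. (x::real, t) \<in> U}"
  using continuous_open_vimage[of U "\<lambda>t. (x, t)"] by (simp add: vimage_def continuous_intros)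

lemma pd_cong_open:
  assumes "open U" "p \<in> U" "\<And>q. q \<in> U \<Longrightarrow> f q = g q"
  shows "pd i f p = pd i g p \<and> (pd_exists i f p \<longleftrightarrow> pd_exists i g p)"
proof (cases "i = 1")
  case True
  have S: "open {s. (s, snd p) \<in> U}" "fst p \<in> {s. (s, snd p) \<in> U}"
    "\<And>s. s \<in> {s. (s, snd p) \<in> U} \<Longrightarrow> f (s, snd p) = g (s, snd p)"
    using open_slice_fst[OF assms(1)] assms(2,3) by auto
  show ?thesis
    using True vector_derivative_cong_open[OF S] differentiable_cong_open[OF S]
    by (simp add: pd_def pd_exists_def)
next
  case False
  have S: "open {t. (fst p, t) \<in> U}" "snd p \<in> {t. (fst p, t) \<in> U}"
    "\<And>t. t \<in> {t. (fst p, t) \<in> U} \<Longrightarrow> f (fst p, t) = g (fst p, t)"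
    using open_slice_snd[OF assms(1)] assms(2,3) by auto
  show ?thesis
    using False vector_derivative_cong_open[OF S] differentiable_cong_open[OF S]
    by (simp add: pd_def pd_exists_def)
qed

lemma pds_cong_open:
  assumes "open U" "\<And>q. q \<in> U \<Longrightarrow> f q = g q" "q \<in> U"
  shows "pds is f q = pds is g q"
  using assms(3)
proof (induction "is" arbitrary: q)
  case (Cons i "is")
  then show ?case
    using pd_cong_open[OF assms(1) Cons.prems Cons.IH] by simp
qed (simp add: assms(2))

lemma pds_zero: "pds is (\<lambda>_. 0) p = 0"
  by (induction "is" arbitrary: p) (simp_all add: pd_def)

lemma smooth_onD:
  assumes "smooth_on U f" "set is \<subseteq> {1, 2}"
  shows "continuous_on U (pds is f)" and "i \<in> {1, 2} \<Longrightarrow> p \<in> U \<Longrightarrow> pd_exists i (pds is f) p"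
  using assms unfolding smooth_on_def by blast+

lemma smooth_on_pd_exists: "smooth_on U f \<Longrightarrow> i \<in> {1, 2} \<Longrightarrow> p \<in> U \<Longrightarrow> pd_exists i f p"
  using smooth_onD(2)[of U f "[]" i p] by simp

lemma smooth_on_cong_open:
  assumes "open U" "\<And>q. q \<in> U \<Longrightarrow> f q = g q"
  shows "smooth_on U f \<longleftrightarrow> smooth_on U g"
proof -
  have "continuous_on U (pds is f) \<longleftrightarrow> continuous_on U (pds is g)" for "is"
    by (rule continuous_on_cong[OF refl pds_cong_open[OF assms]])
  moreover have "(\<forall>p\<in>U. pd_exists i (pds is f) p) \<longleftrightarrow> (\<forall>p\<in>U. pd_exists i (pds is g) p)" for i "is"
    using pd_cong_open[where f="pds is f" and g="pds is g", OF assms(1) _ pds_cong_open[OF assms]]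
    by (intro ball_cong) blast+
  ultimately show ?thesis
    unfolding smooth_on_def by (simp only:)
qed

lemma pds_replicate_1: "pds (replicate n 1) f (s, y) = (vderiv ^^ n) (\<lambda>s. f (s, y)) s"
proof (induction n arbitrary: s)
  case (Suc n)
  have "(\<lambda>s. pds (replicate n 1) f (s, y)) = (vderiv ^^ n) (\<lambda>s. f (s, y))"
    by (rule ext) (rule Suc.IH)
  then show ?case
    by (simp add: pd_def vderiv_funpow_Suc del: funpow.simps)
qed simp

lemma pds_replicate_2: "pds (replicate n 2) f (x, t) = (vderiv ^^ n) (\<lambda>t. f (x, t)) t"
proof (induction n arbitrary: t)
  case (Suc n)
  have "(\<lambda>t. pds (replicate n 2) f (x, t)) = (vderiv ^^ n) (\<lambda>t. f (x, t))"
    by (rule ext) (rule Suc.IH)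
  then show ?case
    by (simp add: pd_def vderiv_funpow_Suc del: funpow.simps)
qed simp

lemma smooth1_on_slice_fst:
  assumes "smooth_on U f" "\<And>s. s \<in> S \<Longrightarrow> (s, y) \<in> U"
  shows "smooth1_on S (\<lambda>s. f (s, y))"
  unfolding smooth1_on_def
proof (intro allI ballI)
  fix n x assume "x \<in> S"
  moreover have "set (replicate n (1::nat)) \<subseteq> {1, 2}"
    by auto
  ultimately have "pd_exists 1 (pds (replicate n 1) f) (x, y)"
    using smooth_onD(2)[OF assms(1)] assms(2) by simp
  then have "(\<lambda>s. pds (replicate n 1) f (s, y)) differentiable (at x)"
    by (simp add: pd_exists_def)
  then show "(vderiv ^^ n) (\<lambda>s. f (s, y)) differentiable (at x)"
    by (simp only: pds_replicate_1)
qed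

lemma smooth1_on_slice_snd:
  assumes "smooth_on U f" "\<And>t. t \<in> T \<Longrightarrow> (x, t) \<in> U"
  shows "smooth1_on T (\<lambda>t. f (x, t))"
  unfolding smooth1_on_def
proof (intro allI ballI)
  fix n y assume "y \<in> T"
  moreover have "set (replicate n (2::nat)) \<subseteq> {1, 2}"
    by auto
  ultimately have "pd_exists 2 (pds (replicate n 2) f) (x, y)"
    using smooth_onD(2)[OF assms(1)] assms(2) by simp
  then show "(vderiv ^^ n) (\<lambda>t. f (x, t)) differentiable (at y)"
    by (simp add: pd_exists_def pds_replicate_2 del: funpow.simps)
qed

lemma pd_separable:
  assumes a: "smooth1_on UNIV a" and b: "smooth1_on S b" and p: "fst p \<in> S"
  shows "pd i (\<lambda>q. (vderiv ^^ m) a (snd q) * (vderiv ^^ n) b (fst q)) p =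
      (if i = 1 then (vderiv ^^ m) a (snd p) * (vderiv ^^ Suc n) b (fst p)
       else (vderiv ^^ Suc m) a (snd p) * (vderiv ^^ n) b (fst p))"
    and "pd_exists i (\<lambda>q. (vderiv ^^ m) a (snd q) * (vderiv ^^ n) b (fst q)) p"
proof -
  have dx: "((\<lambda>s. (vderiv ^^ m) a (snd p) * (vderiv ^^ n) b s) has_vector_derivative
      (vderiv ^^ m) a (snd p) * (vderiv ^^ Suc n) b (fst p)) (at (fst p))"
    using has_vector_derivative_mult_right[OF smooth1_on_has_vector_derivative[OF b p, of n],
        of "(vderiv ^^ m) a (snd p)"] .
  have dy: "((\<lambda>t. (vderiv ^^ m) a t * (vderiv ^^ n) b (fst p)) has_vector_derivative
      (vderiv ^^ Suc m) a (snd p) * (vderiv ^^ n) b (fst p)) (at (snd p))"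
    using has_vector_derivative_mult_left[OF smooth1_on_has_vector_derivative[OF a UNIV_I, of m],
        of "(vderiv ^^ n) b (fst p)"] .
  show "pd i (\<lambda>q. (vderiv ^^ m) a (snd q) * (vderiv ^^ n) b (fst q)) p =
      (if i = 1 then (vderiv ^^ m) a (snd p) * (vderiv ^^ Suc n) b (fst p)
       else (vderiv ^^ Suc m) a (snd p) * (vderiv ^^ n) b (fst p))"
    using vector_derivative_at[OF dx] vector_derivative_at[OF dy]
    by (simp add: pd_def del: funpow.simps)
  show "pd_exists i (\<lambda>q. (vderiv ^^ m) a (snd q) * (vderiv ^^ n) b (fst q)) p"
    using differentiableI_vector[OF dx] differentiableI_vector[OF dy]
    by (simp add: pd_exists_def del: funpow.simps)
qed

lemma pds_separable:
  assumes "open S" "smooth1_on UNIV a" "smooth1_on S b" "fst p \<in> S"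
  shows "pds is (\<lambda>q. a (snd q) * b (fst q)) p =
    (vderiv ^^ length (filter (\<lambda>i. i \<noteq> 1) is)) a (snd p) *
    (vderiv ^^ length (filter (\<lambda>i. i = 1) is)) b (fst p)"
  using assms(4)
proof (induction "is" arbitrary: p)
  case (Cons i "is")
  have "pds (i # is) (\<lambda>q. a (snd q) * b (fst q)) p =
    pd i (\<lambda>q. (vderiv ^^ length (filter (\<lambda>i. i \<noteq> 1) is)) a (snd q) *
              (vderiv ^^ length (filter (\<lambda>i. i = 1) is)) b (fst q)) p"
    using pd_cong_open[OF open_Times[OF assms(1) open_UNIV], of p, OF _ Cons.IH] Cons.prems
    by (simp add: mem_Times_iff)
  then show ?case
    using pd_separable(1)[OF assms(2,3) Cons.prems, where m="length (filter (\<lambda>i. i \<noteq> 1) is)"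
        and n="length (filter (\<lambda>i. i = 1) is)" and i=i]
    by (simp del: funpow.simps)
qed simp

lemma continuous_on_vderiv_funpow: "smooth1_on S f \<Longrightarrow> continuous_on S ((vderiv ^^ n) f)"
  unfolding smooth1_on_def
  by (intro continuous_at_imp_continuous_on ballI differentiable_imp_continuous_within) blast

lemma smooth_on_separable:
  assumes U: "open U" and a: "smooth1_on UNIV a" and b: "smooth1_on (fst ` U) b"
  shows "smooth_on U (\<lambda>q. a (snd q) * b (fst q))"
  unfolding smooth_on_def
proof (intro allI impI conjI ballI)
  fix "is" :: "nat list"
  define m where "m = length (filter (\<lambda>i. i \<noteq> 1) is)"
  define n where "n = length (filter (\<lambda>i. i = 1) is)"
  have eq: "\<And>q. q \<in> U \<Longrightarrow>
      pds is (\<lambda>q. a (snd q) * b (fst q)) q = (vderiv ^^ m) a (snd q) * (vderiv ^^ n) b (fst q)"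
    unfolding m_def n_def by (rule pds_separable[OF open_image_fst[OF U] a b imageI])
  have "continuous_on U (\<lambda>q. (vderiv ^^ m) a (snd q))"
    by (rule continuous_on_compose2[OF continuous_on_vderiv_funpow[OF a] continuous_on_snd[OF continuous_on_id]])
      simp
  moreover have "continuous_on U (\<lambda>q. (vderiv ^^ n) b (fst q))"
    by (rule continuous_on_compose2[OF continuous_on_vderiv_funpow[OF b] continuous_on_fst[OF continuous_on_id]])
      simp
  ultimately have "continuous_on U (\<lambda>q. (vderiv ^^ m) a (snd q) * (vderiv ^^ n) b (fst q))"
    by (rule continuous_on_mult)
  then show "continuous_on U (pds is (\<lambda>q. a (snd q) * b (fst q)))"
    by (simp only: continuous_on_cong[OF refl eq])
  fix i p assume p: "p \<in> U"
  have "pd_exists i (\<lambda>q. (vderiv ^^ m) a (snd q) * (vderiv ^^ n) b (fst q)) p"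
    using pd_separable(2)[OF a b] p by simp
  then show "pd_exists i (pds is (\<lambda>q. a (snd q) * b (fst q))) p"
    using pd_cong_open[OF U p eq] by (simp only:)
qed

lemma smooth_on_zero: "open U \<Longrightarrow> smooth_on U (\<lambda>_. 0)"
  using smooth_on_separable[of U "\<lambda>_. 0" "\<lambda>_. 0"] smooth1_on_const by simp

lemma smooth1_on_fst_factor:
  assumes U: "open U" and F: "smooth_on U F" and eq: "\<And>q. q \<in> U \<Longrightarrow> F q = a (snd q) * v (fst q)"
    and a: "\<And>t. a t \<noteq> 0"
  shows "smooth1_on (fst ` U) v"
proof (rule smooth1_on_locally)
  fix x assume "x \<in> fst ` U"
  then obtain y where xy: "(x, y) \<in> U"
    by force
  let ?S = "{s. (s, y) \<in> U}"
  have sm: "smooth1_on ?S (\<lambda>s. inverse (a y) * F (s, y))"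
    by (rule smooth1_on_cmult[OF open_slice_fst[OF U] smooth1_on_slice_fst[OF F]]) simp
  have "inverse (a y) * F (s, y) = v s" if "s \<in> ?S" for s
    using eq[of "(s, y)"] a[of y] that by (simp add: field_simps)
  then have "smooth1_on ?S (\<lambda>s. inverse (a y) * F (s, y)) \<longleftrightarrow> smooth1_on ?S v"
    by (rule smooth1_on_cong_open[OF open_slice_fst[OF U]])
  with sm have "smooth1_on ?S v"
    by simp
  then show "\<exists>A. x \<in> A \<and> smooth1_on A v"
    using xy by (intro exI[of _ ?S]) simp
qed

lemma smooth_on_comp_fst_iff:
  assumes "open U"
  shows "smooth_on U (\<lambda>q. v (fst q)) \<longleftrightarrow> smooth1_on (fst ` U) v"
proof
  assume "smooth_on U (\<lambda>q. v (fst q))"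
  then show "smooth1_on (fst ` U) v"
    by (rule smooth1_on_fst_factor[OF assms, where a="\<lambda>_. 1"]) simp_all
next
  assume "smooth1_on (fst ` U) v"
  then have "smooth_on U (\<lambda>q. 1 * v (fst q))"
    by (rule smooth_on_separable[OF assms smooth1_on_const])
  then show "smooth_on U (\<lambda>q. v (fst q))"
    by simp
qed

lemma pd_2_Gc: "pd 2 (Gc \<Gamma> i j k) p = 0"
  by (simp add: pd_def Gc_def)

lemma pd_1_Gc_const:
  assumes "open P" "fst p \<in> P" "\<And>s. s \<in> P \<Longrightarrow> complex_of_real (\<Gamma> i j k s) = c"
  shows "pd 1 (Gc \<Gamma> i j k) p = 0"
  using vector_derivative_cong_open[OF assms] by (simp add: pd_def Gc_def)

section \<open>The affine Killing operator\<close>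

definition killing_op :: "(nat \<Rightarrow> nat \<Rightarrow> nat \<Rightarrow> real \<Rightarrow> real) \<Rightarrow> vfield \<Rightarrow> real \<times> real \<Rightarrow>
    nat \<Rightarrow> nat \<Rightarrow> nat \<Rightarrow> complex" where
  "killing_op \<Gamma> X p i j k = pd i (pd j (X k)) p
     + (\<Sum>l\<in>{1, 2}. X l p * pd l (Gc \<Gamma> i j k) p
                     - Gc \<Gamma> i j l p * pd l (X k) p
                     + Gc \<Gamma> i l k p * pd j (X l) p
                     + Gc \<Gamma> l j k p * pd i (X l) p)"

lemma KC_iff_killing_op:
  "X \<in> KC \<Gamma> U \<longleftrightarrow> smooth_on U (X 1) \<and> smooth_on U (X 2) \<and>
     (\<forall>p\<in>U. \<forall>i\<in>{1, 2}. \<forall>j\<in>{1, 2}. \<forall>k\<in>{1, 2}. killing_op \<Gamma> X p i j k = 0)"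
  by (simp add: KC_def killing_op_def)

lemma killing_op_expand:
  "killing_op \<Gamma> X p i j k = pd i (pd j (X k)) p
     + (X 1 p * pd 1 (Gc \<Gamma> i j k) p - Gc \<Gamma> i j 1 p * pd 1 (X k) p
        + Gc \<Gamma> i 1 k p * pd j (X 1) p + Gc \<Gamma> 1 j k p * pd i (X 1) p)
     + (X 2 p * pd 2 (Gc \<Gamma> i j k) p - Gc \<Gamma> i j 2 p * pd 2 (X k) p
        + Gc \<Gamma> i 2 k p * pd j (X 2) p + Gc \<Gamma> 2 j k p * pd i (X 2) p)"
  by (simp add: killing_op_def)

lemma ball_index_triples:
  "(\<forall>i\<in>{1::nat, 2}. \<forall>j\<in>{1::nat, 2}. \<forall>k\<in>{1::nat, 2}. Q i j k) \<longleftrightarrow>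
     Q 1 1 1 \<and> Q 1 2 1 \<and> Q 2 1 1 \<and> Q 2 2 1 \<and> Q 1 1 2 \<and> Q 1 2 2 \<and> Q 2 1 2 \<and> Q 2 2 2"
  by auto

lemma killing_op_vertical_separable:
  assumes U: "open U" and a: "smooth1_on UNIV a" and v: "smooth1_on (fst ` U) v"
    and X: "\<forall>q\<in>U. X 1 q = 0 \<and> X 2 q = a (snd q) * v (fst q)" and p: "p \<in> U"
  defines "A0 \<equiv> a (snd p)" and "A1 \<equiv> vderiv a (snd p)" and "A2 \<equiv> (vderiv ^^ 2) a (snd p)"
    and "V0 \<equiv> v (fst p)" and "V1 \<equiv> vderiv v (fst p)" and "V2 \<equiv> (vderiv ^^ 2) v (fst p)"
  shows "killing_op \<Gamma> X p 1 1 1 = (Gc \<Gamma> 1 2 1 p + Gc \<Gamma> 2 1 1 p) * (A0 * V1)"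
    and "killing_op \<Gamma> X p 1 2 1 = Gc \<Gamma> 1 2 1 p * (A1 * V0) + Gc \<Gamma> 2 2 1 p * (A0 * V1)"
    and "killing_op \<Gamma> X p 2 1 1 = Gc \<Gamma> 2 2 1 p * (A0 * V1) + Gc \<Gamma> 2 1 1 p * (A1 * V0)"
    and "killing_op \<Gamma> X p 2 2 1 = 2 * Gc \<Gamma> 2 2 1 p * (A1 * V0)"
    and "killing_op \<Gamma> X p 1 1 2 = A0 * V2 - Gc \<Gamma> 1 1 1 p * (A0 * V1) - Gc \<Gamma> 1 1 2 p * (A1 * V0)
                              + (Gc \<Gamma> 1 2 2 p + Gc \<Gamma> 2 1 2 p) * (A0 * V1)"
    and "killing_op \<Gamma> X p 1 2 2 = A1 * V1 - Gc \<Gamma> 1 2 1 p * (A0 * V1) + Gc \<Gamma> 2 2 2 p * (A0 * V1)"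
    and "killing_op \<Gamma> X p 2 1 2 = A1 * V1 - Gc \<Gamma> 2 1 1 p * (A0 * V1) + Gc \<Gamma> 2 2 2 p * (A0 * V1)"
    and "killing_op \<Gamma> X p 2 2 2 = A2 * V0 - Gc \<Gamma> 2 2 1 p * (A0 * V1) + Gc \<Gamma> 2 2 2 p * (A1 * V0)"
proof -
  have X1: "\<And>q. q \<in> U \<Longrightarrow> X 1 q = 0" and X2: "\<And>q. q \<in> U \<Longrightarrow> X 2 q = a (snd q) * v (fst q)"
    using X by simp_all
  have P1: "pds is (X 1) p = 0" for "is"
    using pds_cong_open[OF U X1 p] by (simp add: pds_zero)
  have P2: "pds is (X 2) p = (vderiv ^^ length (filter (\<lambda>i. i \<noteq> 1) is)) a (snd p) *
      (vderiv ^^ length (filter (\<lambda>i. i = 1) is)) v (fst p)" for "is"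
    using pds_cong_open[OF U X2 p] pds_separable[OF open_image_fst[OF U] a v imageI[OF p]] by simp
  have z1: "pd j (X 1) p = 0" and z2: "pd i (pd j (X 1)) p = 0" for i j
    using P1[of "[j]"] P1[of "[i, j]"] by simp_all
  have x0: "X 1 p = 0" "X 2 p = A0 * V0"
    using X1[OF p] X2[OF p] by (simp_all add: A0_def V0_def)
  have d: "pd 1 (X 2) p = A0 * V1" "pd 2 (X 2) p = A1 * V0"
    "pd 1 (pd 1 (X 2)) p = A0 * V2" "pd 1 (pd 2 (X 2)) p = A1 * V1"
    "pd 2 (pd 1 (X 2)) p = A1 * V1" "pd 2 (pd 2 (X 2)) p = A2 * V0"
    using P2[of "[1]"] P2[of "[2]"] P2[of "[1, 1]"] P2[of "[1, 2]"] P2[of "[2, 1]"] P2[of "[2, 2]"]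
    by (simp_all add: A0_def A1_def A2_def V0_def V1_def V2_def numeral_2_eq_2)
  note R = killing_op_expand z1 z2 x0 d pd_2_Gc
  show "killing_op \<Gamma> X p 1 1 1 = (Gc \<Gamma> 1 2 1 p + Gc \<Gamma> 2 1 1 p) * (A0 * V1)"
    by (simp only: R) (simp add: algebra_simps)
  show "killing_op \<Gamma> X p 1 2 1 = Gc \<Gamma> 1 2 1 p * (A1 * V0) + Gc \<Gamma> 2 2 1 p * (A0 * V1)"
    by (simp only: R) (simp add: algebra_simps)
  show "killing_op \<Gamma> X p 2 1 1 = Gc \<Gamma> 2 2 1 p * (A0 * V1) + Gc \<Gamma> 2 1 1 p * (A1 * V0)"
    by (simp only: R) (simp add: algebra_simps)
  show "killing_op \<Gamma> X p 2 2 1 = 2 * Gc \<Gamma> 2 2 1 p * (A1 * V0)"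
    by (simp only: R) (simp add: algebra_simps)
  show "killing_op \<Gamma> X p 1 1 2 = A0 * V2 - Gc \<Gamma> 1 1 1 p * (A0 * V1) - Gc \<Gamma> 1 1 2 p * (A1 * V0)
                              + (Gc \<Gamma> 1 2 2 p + Gc \<Gamma> 2 1 2 p) * (A0 * V1)"
    by (simp only: R) (simp add: algebra_simps)
  show "killing_op \<Gamma> X p 1 2 2 = A1 * V1 - Gc \<Gamma> 1 2 1 p * (A0 * V1) + Gc \<Gamma> 2 2 2 p * (A0 * V1)"
    by (simp only: R) (simp add: algebra_simps)
  show "killing_op \<Gamma> X p 2 1 2 = A1 * V1 - Gc \<Gamma> 2 1 1 p * (A0 * V1) + Gc \<Gamma> 2 2 2 p * (A0 * V1)"
    by (simp only: R) (simp add: algebra_simps)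
  show "killing_op \<Gamma> X p 2 2 2 = A2 * V0 - Gc \<Gamma> 2 2 1 p * (A0 * V1) + Gc \<Gamma> 2 2 2 p * (A1 * V0)"
    by (simp only: R) (simp add: algebra_simps)
qed

lemma killing_op_vf_under_star:
  assumes U: "open U" and st: "star \<Gamma> U \<alpha>" and p: "p \<in> U"
  shows "killing_op \<Gamma> (vf u w) p 2 2 1 = pd 2 (pd 2 u) p + \<alpha> * pd 2 u p"
    and "killing_op \<Gamma> (vf u w) p 1 1 2 = pd 1 (pd 1 w) p + (Gc \<Gamma> 1 2 2 p + Gc \<Gamma> 2 1 2 p) * pd 1 w p"
    and "killing_op \<Gamma> (vf u w) p 2 2 2 =
      pd 2 (pd 2 w) p + (Gc \<Gamma> 1 2 2 p + Gc \<Gamma> 2 1 2 p) * pd 2 u p - \<alpha> * pd 2 w p"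
proof -
  have P: "open (fst ` U)" "fst p \<in> fst ` U"
    using open_image_fst[OF U] p by auto
  have dG: "pd 1 (Gc \<Gamma> 2 2 1) p = 0" "pd 1 (Gc \<Gamma> 1 1 2) p = 0" "pd 1 (Gc \<Gamma> 2 2 2) p = 0"
    by (rule pd_1_Gc_const[OF P, where c=0], use st in \<open>force simp: star_def\<close>)+
      (rule pd_1_Gc_const[OF P, where c="- \<alpha>"], use st in \<open>force simp: star_def\<close>)
  have G: "Gc \<Gamma> 1 1 1 p = 0" "Gc \<Gamma> 1 1 2 p = 0" "Gc \<Gamma> 1 2 1 p = 0" "Gc \<Gamma> 2 1 1 p = 0"
    "Gc \<Gamma> 2 2 1 p = 0" "Gc \<Gamma> 2 2 2 p = - \<alpha>"
    using st p unfolding star_def by (simp_all add: Gc_def)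
  have v: "vf u w 1 = u" "vf u w 2 = w"
    by (simp_all add: vf_def)
  note R = killing_op_expand v G dG pd_2_Gc
  show "killing_op \<Gamma> (vf u w) p 2 2 1 = pd 2 (pd 2 u) p + \<alpha> * pd 2 u p"
    by (simp only: R) (simp add: algebra_simps)
  show "killing_op \<Gamma> (vf u w) p 1 1 2 = pd 1 (pd 1 w) p + (Gc \<Gamma> 1 2 2 p + Gc \<Gamma> 2 1 2 p) * pd 1 w p"
    by (simp only: R) (simp add: algebra_simps)
  show "killing_op \<Gamma> (vf u w) p 2 2 2 =
      pd 2 (pd 2 w) p + (Gc \<Gamma> 1 2 2 p + Gc \<Gamma> 2 1 2 p) * pd 2 u p - \<alpha> * pd 2 w p"
    by (simp only: R) (simp add: algebra_simps)
qed

section \<open>Vertical Killing fields\<close>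

lemma KalphaD:
  assumes U: "open U" and X: "X \<in> Kalpha \<Gamma> U \<alpha>"
  shows "\<exists>v. smooth1_on (fst ` U) v
    \<and> (\<forall>q\<in>U. X 1 q = 0 \<and> X 2 q = exp (\<alpha> * complex_of_real (snd q)) * v (fst q))
    \<and> (\<forall>p\<in>U. \<forall>i\<in>{1, 2}. \<forall>j\<in>{1, 2}. \<forall>k\<in>{1, 2}. killing_op \<Gamma> X p i j k = 0)"
proof -
  obtain v where K: "X \<in> KC \<Gamma> U"
    and f: "\<forall>q\<in>U. X 1 q = 0 \<and> X 2 q = exp (\<alpha> * complex_of_real (snd q)) * v (fst q)"
    using X unfolding Kalpha_def by blast
  have "smooth1_on (fst ` U) v"
    by (rule smooth1_on_fst_factor[OF U, where F="X 2" and a="\<lambda>t. exp (\<alpha> * complex_of_real t)"])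
      (use K f in \<open>simp_all add: KC_iff_killing_op\<close>)
  then show ?thesis
    using K f by (auto simp: KC_iff_killing_op)
qed

lemma killing_op_exp_vertical_iff:
  assumes U: "open U" and v: "smooth1_on (fst ` U) v"
    and X: "\<forall>q\<in>U. X 1 q = 0 \<and> X 2 q = exp (\<alpha> * complex_of_real (snd q)) * v (fst q)"
    and p: "p \<in> U"
  defines "V0 \<equiv> v (fst p)" and "V1 \<equiv> vderiv v (fst p)" and "V2 \<equiv> (vderiv ^^ 2) v (fst p)"
  shows "(\<forall>i\<in>{1, 2}. \<forall>j\<in>{1, 2}. \<forall>k\<in>{1, 2}. killing_op \<Gamma> X p i j k = 0) \<longleftrightarrow>
    (Gc \<Gamma> 1 2 1 p + Gc \<Gamma> 2 1 1 p) * V1 = 0 \<and>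
    Gc \<Gamma> 1 2 1 p * (\<alpha> * V0) + Gc \<Gamma> 2 2 1 p * V1 = 0 \<and>
    Gc \<Gamma> 2 2 1 p * V1 + Gc \<Gamma> 2 1 1 p * (\<alpha> * V0) = 0 \<and>
    Gc \<Gamma> 2 2 1 p * (\<alpha> * V0) = 0 \<and>
    V2 - Gc \<Gamma> 1 1 1 p * V1 - Gc \<Gamma> 1 1 2 p * (\<alpha> * V0) + (Gc \<Gamma> 1 2 2 p + Gc \<Gamma> 2 1 2 p) * V1 = 0 \<and>
    \<alpha> * V1 - Gc \<Gamma> 1 2 1 p * V1 + Gc \<Gamma> 2 2 2 p * V1 = 0 \<and>
    \<alpha> * V1 - Gc \<Gamma> 2 1 1 p * V1 + Gc \<Gamma> 2 2 2 p * V1 = 0 \<and>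
    \<alpha>\<^sup>2 * V0 - Gc \<Gamma> 2 2 1 p * V1 + Gc \<Gamma> 2 2 2 p * (\<alpha> * V0) = 0"
proof -
  define e where "e = exp (\<alpha> * complex_of_real (snd p))"
  have e: "e \<noteq> 0"
    by (simp add: e_def)
  have A: "vderiv (\<lambda>t. exp (\<alpha> * complex_of_real t)) (snd p) = \<alpha> * e"
    "(vderiv ^^ 2) (\<lambda>t. exp (\<alpha> * complex_of_real t)) (snd p) = \<alpha>\<^sup>2 * e"
    using vderiv_funpow_exp[of 1 \<alpha>] vderiv_funpow_exp[of 2 \<alpha>] by (simp_all add: e_def)
  note K = killing_op_vertical_separable[OF U smooth1_on_exp v X p, where \<Gamma>=\<Gamma>]
  have K1: "killing_op \<Gamma> X p 1 1 1 = e * ((Gc \<Gamma> 1 2 1 p + Gc \<Gamma> 2 1 1 p) * V1)"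
    unfolding K(1) A by (simp add: e_def V0_def V1_def V2_def algebra_simps)
  have K2: "killing_op \<Gamma> X p 1 2 1 = e * (Gc \<Gamma> 1 2 1 p * (\<alpha> * V0) + Gc \<Gamma> 2 2 1 p * V1)"
    unfolding K(2) A by (simp add: e_def V0_def V1_def V2_def algebra_simps)
  have K3: "killing_op \<Gamma> X p 2 1 1 = e * (Gc \<Gamma> 2 2 1 p * V1 + Gc \<Gamma> 2 1 1 p * (\<alpha> * V0))"
    unfolding K(3) A by (simp add: e_def V0_def V1_def V2_def algebra_simps)
  have K4: "killing_op \<Gamma> X p 2 2 1 = e * (2 * (Gc \<Gamma> 2 2 1 p * (\<alpha> * V0)))"
    unfolding K(4) A by (simp add: e_def V0_def V1_def V2_def algebra_simps)
  have K5: "killing_op \<Gamma> X p 1 1 2 = e * (V2 - Gc \<Gamma> 1 1 1 p * V1 - Gc \<Gamma> 1 1 2 p * (\<alpha> * V0)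
                                    + (Gc \<Gamma> 1 2 2 p + Gc \<Gamma> 2 1 2 p) * V1)"
    unfolding K(5) A by (simp add: e_def V0_def V1_def V2_def algebra_simps)
  have K6: "killing_op \<Gamma> X p 1 2 2 = e * (\<alpha> * V1 - Gc \<Gamma> 1 2 1 p * V1 + Gc \<Gamma> 2 2 2 p * V1)"
    unfolding K(6) A by (simp add: e_def V0_def V1_def V2_def algebra_simps)
  have K7: "killing_op \<Gamma> X p 2 1 2 = e * (\<alpha> * V1 - Gc \<Gamma> 2 1 1 p * V1 + Gc \<Gamma> 2 2 2 p * V1)"
    unfolding K(7) A by (simp add: e_def V0_def V1_def V2_def algebra_simps)
  have K8: "killing_op \<Gamma> X p 2 2 2 = e * (\<alpha>\<^sup>2 * V0 - Gc \<Gamma> 2 2 1 p * V1 + Gc \<Gamma> 2 2 2 p * (\<alpha> * V0))"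
    unfolding K(8) A by (simp add: e_def V0_def V1_def V2_def algebra_simps)
  show ?thesis
    unfolding ball_index_triples K1 K2 K3 K4 K5 K6 K7 K8 using e by simp
qed

lemma christoffel_values_from_killing_eqs:
  fixes G121 G211 G221 G222 \<alpha> V0 V1 :: complex
  assumes nondeg: "V1 \<noteq> 0 \<or> \<alpha> * V0 \<noteq> 0"
    and e1: "(G121 + G211) * V1 = 0" and e2: "G121 * (\<alpha> * V0) + G221 * V1 = 0"
    and e3: "G221 * V1 + G211 * (\<alpha> * V0) = 0" and e4: "G221 * (\<alpha> * V0) = 0"
    and e6: "\<alpha> * V1 - G121 * V1 + G222 * V1 = 0" and e7: "\<alpha> * V1 - G211 * V1 + G222 * V1 = 0"
    and e8: "\<alpha>\<^sup>2 * V0 - G221 * V1 + G222 * (\<alpha> * V0) = 0"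
  shows "G121 = 0 \<and> G211 = 0 \<and> G221 = 0 \<and> G222 = - \<alpha>"
proof (cases "V1 = 0")
  case True
  with nondeg have nz: "\<alpha> * V0 \<noteq> 0"
    by simp
  have "(\<alpha> + G222) * (\<alpha> * V0) = 0"
    using e8 True by (simp add: algebra_simps power2_eq_square)
  then have "G222 = - \<alpha>"
    using nz by (simp add: eq_neg_iff_add_eq_0 add.commute)
  then show ?thesis
    using e2 e3 e4 True nz by simp
next
  case False
  have "(\<alpha> - G121 + G222) * V1 = 0" "(\<alpha> - G211 + G222) * V1 = 0"
    using e6 e7 by (simp_all add: algebra_simps)
  then have "\<alpha> - G121 + G222 = 0" "\<alpha> - G211 + G222 = 0" "G121 + G211 = 0"
    using e1 False by simp_all
  then have "G121 = 0" "G211 = 0" "G222 = - \<alpha>"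
    by (simp_all add: algebra_simps eq_neg_iff_add_eq_0)
  then show ?thesis
    using e2 False by simp
qed

lemma continuous_on_christoffel:
  assumes "smooth_on U (Gc \<Gamma> i j k)"
  shows "continuous_on (fst ` U) (\<lambda>s. complex_of_real (\<Gamma> i j k s))"
proof (intro continuous_at_imp_continuous_on ballI differentiable_imp_continuous_within)
  fix x assume "x \<in> fst ` U"
  then obtain p where "p \<in> U" "x = fst p"
    by blast
  then show "(\<lambda>s. complex_of_real (\<Gamma> i j k s)) differentiable (at x)"
    using smooth_on_pd_exists[OF assms, of 1 p] by (simp add: pd_exists_def Gc_def)
qed

lemma exp_vertical_nonconstant_nondegenerate:
  fixes g v :: "real \<Rightarrow> complex"
  assumes cP: "connected (fst ` U)" and g: "continuous_on (fst ` U) g" and v: "smooth1_on (fst ` U) v"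
    and ode: "\<And>x. x \<in> fst ` U \<Longrightarrow> (vderiv v has_vector_derivative - g x * vderiv v x) (at x)"
    and Xv: "\<forall>q\<in>U. X 1 q = 0 \<and> X 2 q = exp (\<alpha> * complex_of_real (snd q)) * v (fst q)"
    and nc: "\<not> (\<exists>c. \<forall>p\<in>U. X 1 p = 0 \<and> X 2 p = c)"
    and x: "x \<in> fst ` U"
  shows "vderiv v x \<noteq> 0 \<or> \<alpha> * v x \<noteq> 0"
proof (rule ccontr)
  assume "\<not> (vderiv v x \<noteq> 0 \<or> \<alpha> * v x \<noteq> 0)"
  then have v'x: "vderiv v x = 0" and \<alpha>v: "\<alpha> * v x = 0"
    by simp_all
  have "vderiv v y = 0" if "y \<in> fst ` U" for y
    using linear_ode_vanishing[OF cP g ode x v'x that] .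
  then have "(v has_vector_derivative 0) (at y)" if "y \<in> fst ` U" for y
    using smooth1_on_has_vector_derivative[OF v that, of 0] that by simp
  then have "v (fst q) = v x" if "q \<in> U" for q
    using vderiv_zero_imp_constant[OF cP _ x] that by blast
  then have "\<forall>q\<in>U. X 1 q = 0 \<and> X 2 q = (if \<alpha> = 0 then v x else 0)"
    using Xv \<alpha>v by auto
  then show False
    using nc by blast
qed

lemma star_if_Kalpha_nonconstant:
  assumes U: "open U" and cU: "connected U"
    and sm: "\<forall>i\<in>{1, 2}. \<forall>j\<in>{1, 2}. \<forall>k\<in>{1, 2}. smooth_on U (Gc \<Gamma> i j k)"
    and h111: "\<forall>p\<in>U. \<Gamma> 1 1 1 (fst p) = 0" and h112: "\<forall>p\<in>U. \<Gamma> 1 1 2 (fst p) = 0"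
    and X: "X \<in> Kalpha \<Gamma> U \<alpha>" and nc: "\<not> (\<exists>c. \<forall>p\<in>U. X 1 p = 0 \<and> X 2 p = c)"
  shows "star \<Gamma> U \<alpha>"
proof -
  obtain v where v: "smooth1_on (fst ` U) v"
    and Xv: "\<forall>q\<in>U. X 1 q = 0 \<and> X 2 q = exp (\<alpha> * complex_of_real (snd q)) * v (fst q)"
    and K: "\<forall>p\<in>U. \<forall>i\<in>{1, 2}. \<forall>j\<in>{1, 2}. \<forall>k\<in>{1, 2}. killing_op \<Gamma> X p i j k = 0"
    using KalphaD[OF U X] by blast
  note E = killing_op_exp_vertical_iff[OF U v Xv, where \<Gamma>=\<Gamma>, THEN iffD1]
  have cP: "connected (fst ` U)"
    using connected_continuous_image[OF continuous_on_fst[OF continuous_on_id] cU] by simp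
  define g where "g s = complex_of_real (\<Gamma> 1 2 2 s) + complex_of_real (\<Gamma> 2 1 2 s)" for s
  have ode: "(vderiv v has_vector_derivative - g x * vderiv v x) (at x)" if x: "x \<in> fst ` U" for x
  proof -
    obtain p where p: "p \<in> U" "x = fst p"
      using x by blast
    have "(vderiv ^^ 2) v x + g x * vderiv v x = 0"
      using E[OF p(1) bspec[OF K p(1)]] h111 h112 p by (simp add: g_def Gc_def algebra_simps)
    then have "(vderiv ^^ 2) v x = - g x * vderiv v x"
      by (simp add: eq_neg_iff_add_eq_0)
    then show ?thesis
      using smooth1_on_has_vector_derivative[OF v x, of 1] by (simp add: numeral_2_eq_2)
  qed
  have "smooth_on U (Gc \<Gamma> 1 2 2)" "smooth_on U (Gc \<Gamma> 2 1 2)"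
    using sm by simp_all
  then have "continuous_on (fst ` U) g"
    unfolding g_def by (intro continuous_on_add continuous_on_christoffel)
  note nondeg = exp_vertical_nonconstant_nondegenerate[OF cP this v ode Xv nc]
  show ?thesis
    unfolding star_def
  proof
    fix p assume p: "p \<in> U"
    have "Gc \<Gamma> 1 2 1 p = 0 \<and> Gc \<Gamma> 2 1 1 p = 0 \<and> Gc \<Gamma> 2 2 1 p = 0 \<and> Gc \<Gamma> 2 2 2 p = - \<alpha>"
      using christoffel_values_from_killing_eqs[OF nondeg[of "fst p"]] E[OF p bspec[OF K p]] p by blast
    then show "\<Gamma> 1 1 1 (fst p) = 0 \<and> \<Gamma> 1 1 2 (fst p) = 0 \<and> \<Gamma> 1 2 1 (fst p) = 0 \<and>
        \<Gamma> 2 1 1 (fst p) = 0 \<and> \<Gamma> 2 2 1 (fst p) = 0 \<and> complex_of_real (\<Gamma> 2 2 2 (fst p)) = - \<alpha>"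
      using h111 h112 p by (simp add: Gc_def)
  qed
qed

section \<open>Killing fields under condition (*)\<close>

lemma killing_ops_exp_vertical_under_star_iff:
  assumes U: "open U" and st: "star \<Gamma> U \<alpha>" and v: "smooth1_on (fst ` U) v"
    and X: "\<forall>q\<in>U. X 1 q = 0 \<and> X 2 q = exp (\<alpha> * complex_of_real (snd q)) * v (fst q)"
    and p: "p \<in> U"
  shows "(\<forall>i\<in>{1, 2}. \<forall>j\<in>{1, 2}. \<forall>k\<in>{1, 2}. killing_op \<Gamma> X p i j k = 0) \<longleftrightarrow>
    complex_of_real (\<Gamma> 1 2 2 (fst p) + \<Gamma> 2 1 2 (fst p)) * vector_derivative v (at (fst p))
      + vector_derivative (\<lambda>s. vector_derivative v (at s)) (at (fst p)) = 0"
proof -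
  have G: "Gc \<Gamma> 1 1 1 p = 0" "Gc \<Gamma> 1 1 2 p = 0" "Gc \<Gamma> 1 2 1 p = 0" "Gc \<Gamma> 2 1 1 p = 0"
    "Gc \<Gamma> 2 2 1 p = 0" "Gc \<Gamma> 2 2 2 p = - \<alpha>"
    using st p unfolding star_def by (simp_all add: Gc_def)
  show ?thesis
    unfolding killing_op_exp_vertical_iff[OF U v X p] G
    by (simp add: Gc_def vderiv_def numeral_2_eq_2 algebra_simps power2_eq_square)
qed

lemma Kalpha_iff_ode:
  assumes U: "open U" and st: "star \<Gamma> U \<alpha>"
  shows "X \<in> Kalpha \<Gamma> U \<alpha> \<longleftrightarrow>
    (\<exists>v :: real \<Rightarrow> complex. smooth_on U (\<lambda>p. v (fst p)) \<and>
       (\<forall>p\<in>U. X 1 p = 0 \<and> X 2 p = exp (\<alpha> * complex_of_real (snd p)) * v (fst p)) \<and>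
       (\<forall>p\<in>U. complex_of_real (\<Gamma> 1 2 2 (fst p) + \<Gamma> 2 1 2 (fst p)) * vector_derivative v (at (fst p))
                + vector_derivative (\<lambda>s. vector_derivative v (at s)) (at (fst p)) = 0))"
  (is "_ \<longleftrightarrow> (\<exists>v. ?smooth v \<and> ?shape v \<and> ?ode v)")
proof
  assume "X \<in> Kalpha \<Gamma> U \<alpha>"
  then obtain v where v: "smooth1_on (fst ` U) v" and Xv: "?shape v"
    and K: "\<forall>p\<in>U. \<forall>i\<in>{1, 2}. \<forall>j\<in>{1, 2}. \<forall>k\<in>{1, 2}. killing_op \<Gamma> X p i j k = 0"
    using KalphaD[OF U] by blast
  have "?smooth v"
    using v smooth_on_comp_fst_iff[OF U] by simp
  moreover have "?ode v"
    using iffD1[OF killing_ops_exp_vertical_under_star_iff[OF U st v Xv] bspec[OF K]] by blast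
  ultimately show "\<exists>v. ?smooth v \<and> ?shape v \<and> ?ode v"
    using Xv by blast
next
  assume "\<exists>v. ?smooth v \<and> ?shape v \<and> ?ode v"
  then obtain v where sv: "?smooth v" and Xv: "?shape v" and ode: "?ode v"
    by blast
  have v: "smooth1_on (fst ` U) v"
    using sv smooth_on_comp_fst_iff[OF U] by simp
  have "smooth_on U (\<lambda>_. 0) \<longleftrightarrow> smooth_on U (X 1)"
    by (rule smooth_on_cong_open[OF U]) (use Xv in simp)
  then have X1: "smooth_on U (X 1)"
    using smooth_on_zero[OF U] by simp
  have "smooth_on U (\<lambda>q. exp (\<alpha> * complex_of_real (snd q)) * v (fst q)) \<longleftrightarrow> smooth_on U (X 2)"
    by (rule smooth_on_cong_open[OF U]) (use Xv in simp)
  then have X2: "smooth_on U (X 2)"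
    using smooth_on_separable[OF U smooth1_on_exp v] by simp
  have "\<forall>p\<in>U. \<forall>i\<in>{1, 2}. \<forall>j\<in>{1, 2}. \<forall>k\<in>{1, 2}. killing_op \<Gamma> X p i j k = 0"
    using iffD2[OF killing_ops_exp_vertical_under_star_iff[OF U st v Xv] bspec[OF ode]] by blast
  then have "X \<in> KC \<Gamma> U"
    unfolding KC_iff_killing_op using X1 X2 by blast
  then show "X \<in> Kalpha \<Gamma> U \<alpha>"
    unfolding Kalpha_def using Xv by blast
qed

lemma KC_vf_smooth: "vf u w \<in> KC \<Gamma> U \<Longrightarrow> smooth_on U u \<and> smooth_on U w"
  by (simp add: KC_def vf_def)

lemma killing_eqs_vf_under_star:
  assumes U: "open U" and st: "star \<Gamma> U \<alpha>" and K: "vf u w \<in> KC \<Gamma> U" and p: "p \<in> U"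
  shows "\<alpha> * pd 2 u p + pd 2 (pd 2 u) p = 0"
    and "(Gc \<Gamma> 1 2 2 p + Gc \<Gamma> 2 1 2 p) * pd 1 w p + pd 1 (pd 1 w) p = 0"
    and "pd 2 (pd 2 w) p + (Gc \<Gamma> 1 2 2 p + Gc \<Gamma> 2 1 2 p) * pd 2 u p - \<alpha> * pd 2 w p = 0"
proof -
  have "\<forall>i\<in>{1, 2}. \<forall>j\<in>{1, 2}. \<forall>k\<in>{1, 2}. killing_op \<Gamma> (vf u w) p i j k = 0"
    using K p unfolding KC_iff_killing_op by blast
  then have "killing_op \<Gamma> (vf u w) p 2 2 1 = 0" "killing_op \<Gamma> (vf u w) p 1 1 2 = 0"
    "killing_op \<Gamma> (vf u w) p 2 2 2 = 0"
    unfolding ball_index_triples by simp_all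
  then show "\<alpha> * pd 2 u p + pd 2 (pd 2 u) p = 0"
    and "(Gc \<Gamma> 1 2 2 p + Gc \<Gamma> 2 1 2 p) * pd 1 w p + pd 1 (pd 1 w) p = 0"
    and "pd 2 (pd 2 w) p + (Gc \<Gamma> 1 2 2 p + Gc \<Gamma> 2 1 2 p) * pd 2 u p - \<alpha> * pd 2 w p = 0"
    unfolding killing_op_vf_under_star[OF U st p] by (simp_all add: add.commute)
qed

lemma pd_2_pd_2_pd_2_eq_0:
  assumes U: "open U" and st: "star \<Gamma> U 0" and K: "vf u W \<in> KC \<Gamma> U" and q: "q \<in> U"
  shows "pd 2 (pd 2 (pd 2 W)) q = 0"
proof -
  define c where "c p = - (Gc \<Gamma> 1 2 2 p + Gc \<Gamma> 2 1 2 p)" for p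
  have eq: "\<And>p. p \<in> U \<Longrightarrow> pd 2 (pd 2 W) p = c p * pd 2 u p"
    using killing_eqs_vf_under_star(3)[OF U st K] by (simp add: c_def algebra_simps eq_neg_iff_add_eq_0)
  have "pd 2 (pd 2 (pd 2 W)) q = pd 2 (\<lambda>p. c p * pd 2 u p) q"
    using pd_cong_open[OF U q eq] by simp
  also have "\<dots> = c q * pd 2 (pd 2 u) q"
  proof -
    have "pd_exists 2 (pd 2 u) q"
      using smooth_onD(2)[of U u "[2]" 2 q] KC_vf_smooth[OF K] q by simp
    then have "((\<lambda>t. pd 2 u (fst q, t)) has_vector_derivative pd 2 (pd 2 u) q) (at (snd q))"
      by (simp add: pd_def pd_exists_def vector_derivative_works[symmetric])
    from has_vector_derivative_mult_right[OF this, of "c q"]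
    show ?thesis
      by (simp add: pd_def c_def Gc_def vector_derivative_at)
  qed
  also have "\<dots> = 0"
    using killing_eqs_vf_under_star(1)[OF U st K q] by simp
  finally show ?thesis .
qed

lemma slice_snd_quadratic:
  assumes U: "open U" and st: "star \<Gamma> U 0" and K: "vf u W \<in> KC \<Gamma> U"
    and T: "convex T" and sT: "\<And>t. t \<in> T \<Longrightarrow> (s, t) \<in> U"
  shows "\<exists>c. \<forall>t\<in>T. W (s, t) = (\<Sum>i<3. c i * complex_of_real t ^ i)"
proof (rule vderiv_funpow_zero_imp_polynomial[OF T])
  show "smooth1_on T (\<lambda>t. W (s, t))"
    using smooth1_on_slice_snd[OF conjunct2[OF KC_vf_smooth[OF K]] sT] .
  fix t assume "t \<in> T"
  have "(vderiv ^^ 3) (\<lambda>t. W (s, t)) t = pds (replicate 3 2) W (s, t)"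
    by (rule pds_replicate_2[symmetric])
  also have "\<dots> = 0"
    using pd_2_pd_2_pd_2_eq_0[OF U st K sT[OF \<open>t \<in> T\<close>]] by (simp add: numeral_3_eq_3)
  finally show "(vderiv ^^ 3) (\<lambda>t. W (s, t)) t = 0" .
qed

lemma powser_coefficients_of_quadratic_slice:
  assumes U: "open U" and st: "star \<Gamma> U 0" and K: "vf u W \<in> KC \<Gamma> U"
    and ser: "\<forall>p\<in>U. (\<lambda>n. w n (fst p) * complex_of_real (snd p) ^ n) sums W p"
    and ab: "a < b" and sU: "\<And>t. t \<in> {a..b} \<Longrightarrow> (s, t) \<in> U"
  shows "\<exists>c. (\<forall>t\<in>{a..b}. W (s, t) = (\<Sum>i<3. c i * complex_of_real t ^ i))
    \<and> (\<forall>m. w m s = (if m < 3 then c m else 0))"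
proof -
  obtain c where c: "\<forall>t\<in>{a..b}. W (s, t) = (\<Sum>i<3. c i * complex_of_real t ^ i)"
    using slice_snd_quadratic[OF U st K convex_real_interval(5) sU] by blast
  have "w m s = (if m < 3 then c m else 0)" for m
  proof (rule powser_eq_polynomial_on_interval[OF ab])
    fix t assume t: "t \<in> {a..b}"
    show "(\<lambda>m. w m s * complex_of_real t ^ m) sums (\<Sum>i<3. c i * complex_of_real t ^ i)"
      using bspec[OF ser sU[OF t]] bspec[OF c t] by simp
  qed
  with c show ?thesis
    by blast
qed

lemma coefficient_locally_lincomb_of_slices:
  assumes U: "open U" and st: "star \<Gamma> U 0" and K: "vf u W \<in> KC \<Gamma> U"
    and ser: "\<forall>p\<in>U. (\<lambda>n. w n (fst p) * complex_of_real (snd p) ^ n) sums W p"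
    and x0: "x0 \<in> fst ` U"
  shows "\<exists>A t0 t1 t2 l0 l1 l2. open A \<and> x0 \<in> A \<and> (\<forall>s\<in>A. (s, t0) \<in> U \<and> (s, t1) \<in> U \<and> (s, t2) \<in> U)
           \<and> (\<forall>s\<in>A. w n s = l0 * W (s, t0) + l1 * W (s, t1) + l2 * W (s, t2))"
proof -
  obtain y0 where xy: "(x0, y0) \<in> U"
    using x0 by force
  obtain A B where A: "open A" "open B" "(x0, y0) \<in> A \<times> B" "A \<times> B \<subseteq> U"
    using open_prod_elim[OF U xy] by blast
  obtain h where h: "0 < h" "{y0 - h..y0 + h} \<subseteq> B"
    using A(2,3) open_contains_cball[of B] by (force simp: cball_eq_atLeastAtMost)
  have inU: "(s, t) \<in> U" if "s \<in> A" "t \<in> {y0 - h..y0 + h}" for s t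
    using A(4) h(2) that by blast
  have ab: "y0 - h < y0 + h" and "complex_of_real h \<noteq> 0"
    using h by simp_all
  then obtain l0 l1 l2 where l: "\<And>c. (if n < 3 then c n else 0) =
      l0 * (\<Sum>i<3. c i * complex_of_real (y0 - h) ^ i) + l1 * (\<Sum>i<3. c i * complex_of_real y0 ^ i)
      + l2 * (\<Sum>i<3. c i * complex_of_real (y0 + h) ^ i)"
    using quadratic_coeff_lincomb_of_values[of "complex_of_real h" n "complex_of_real y0"] by auto
  have "w n s = l0 * W (s, y0 - h) + l1 * W (s, y0) + l2 * W (s, y0 + h)" if s: "s \<in> A" for s
  proof -
    obtain c where c: "\<forall>t\<in>{y0 - h..y0 + h}. W (s, t) = (\<Sum>i<3. c i * complex_of_real t ^ i)"
      and coeff: "\<And>m. w m s = (if m < 3 then c m else 0)"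
      using powser_coefficients_of_quadratic_slice[OF U st K ser ab inU[OF s]] by blast
    show ?thesis
      using l[of c] c h(1) by (simp add: coeff)
  qed
  then show ?thesis
    using A(1,3) inU h(1)
    by (intro exI[of _ A] exI[of _ "y0 - h"] exI[of _ y0] exI[of _ "y0 + h"] exI[of _ l0] exI[of _ l1]
        exI[of _ l2]) auto
qed

lemma slice_fst_ode:
  assumes U: "open U" and st: "star \<Gamma> U \<alpha>" and K: "vf u W \<in> KC \<Gamma> U" and xt: "(x, t) \<in> U"
  shows "(vderiv ^^ 2) (\<lambda>s. W (s, t)) x
    + complex_of_real (\<Gamma> 1 2 2 x + \<Gamma> 2 1 2 x) * vderiv (\<lambda>s. W (s, t)) x = 0"
proof -
  have "pd 1 W (x, t) = vderiv (\<lambda>s. W (s, t)) x"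
    using pds_replicate_1[of 1 W x t] by simp
  moreover have "pd 1 (pd 1 W) (x, t) = (vderiv ^^ 2) (\<lambda>s. W (s, t)) x"
    using pds_replicate_1[of 2 W x t] by (simp add: numeral_2_eq_2)
  ultimately show ?thesis
    using killing_eqs_vf_under_star(2)[OF U st K xt] by (simp add: Gc_def add.commute)
qed

lemma powser_coefficient_locally_solves_ode:
  assumes U: "open U" and st: "star \<Gamma> U 0" and K: "vf u W \<in> KC \<Gamma> U"
    and ser: "\<forall>p\<in>U. (\<lambda>n. w n (fst p) * complex_of_real (snd p) ^ n) sums W p"
    and x0: "x0 \<in> fst ` U"
  defines "g \<equiv> \<lambda>s. complex_of_real (\<Gamma> 1 2 2 s + \<Gamma> 2 1 2 s)"
  shows "\<exists>A. x0 \<in> A \<and> smooth1_on A (w n) \<and> (vderiv ^^ 2) (w n) x0 + g x0 * vderiv (w n) x0 = 0"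
proof -
  obtain A t0 t1 t2 l0 l1 l2 where A: "open A" "x0 \<in> A"
    and inU: "\<forall>s\<in>A. (s, t0) \<in> U \<and> (s, t1) \<in> U \<and> (s, t2) \<in> U"
    and rep: "\<forall>s\<in>A. w n s = l0 * W (s, t0) + l1 * W (s, t1) + l2 * W (s, t2)"
    using coefficient_locally_lincomb_of_slices[OF U st K ser x0, where n=n] by blast
  have s0: "smooth1_on A (\<lambda>s. W (s, t0))" and s1: "smooth1_on A (\<lambda>s. W (s, t1))"
    and s2: "smooth1_on A (\<lambda>s. W (s, t2))"
    using inU by (auto intro!: smooth1_on_slice_fst[OF conjunct2[OF KC_vf_smooth[OF K]]])
  define h where "h = (\<lambda>s. l0 * W (s, t0) + l1 * W (s, t1))"
  define hh where "hh = (\<lambda>s. 1 * h s + l2 * W (s, t2))"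
  have sh: "smooth1_on A h"
    unfolding h_def by (rule smooth1_on_lincomb[OF A(1) s0 s1])
  have shh: "smooth1_on A hh"
    unfolding hh_def by (rule smooth1_on_lincomb[OF A(1) sh s2])
  have eq: "\<And>s. s \<in> A \<Longrightarrow> hh s = w n s"
    using rep by (simp add: hh_def h_def)
  have "(vderiv ^^ k) (w n) x0 = l0 * (vderiv ^^ k) (\<lambda>s. W (s, t0)) x0
      + l1 * (vderiv ^^ k) (\<lambda>s. W (s, t1)) x0 + l2 * (vderiv ^^ k) (\<lambda>s. W (s, t2)) x0" for k
  proof -
    have "(vderiv ^^ k) (w n) x0 = (vderiv ^^ k) hh x0"
      using vderiv_funpow_cong_open[OF A(1) eq A(2)] by simp
    also have "\<dots> = 1 * (vderiv ^^ k) h x0 + l2 * (vderiv ^^ k) (\<lambda>s. W (s, t2)) x0"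
      unfolding hh_def by (rule vderiv_funpow_lincomb[OF A(1) sh s2 A(2)])
    also have "(vderiv ^^ k) h x0
        = l0 * (vderiv ^^ k) (\<lambda>s. W (s, t0)) x0 + l1 * (vderiv ^^ k) (\<lambda>s. W (s, t1)) x0"
      unfolding h_def by (rule vderiv_funpow_lincomb[OF A(1) s0 s1 A(2)])
    finally show ?thesis
      by simp
  qed
  from this[of 2] this[of 1]
  have "(vderiv ^^ 2) (w n) x0 + g x0 * vderiv (w n) x0
      = l0 * ((vderiv ^^ 2) (\<lambda>s. W (s, t0)) x0 + g x0 * vderiv (\<lambda>s. W (s, t0)) x0)
      + l1 * ((vderiv ^^ 2) (\<lambda>s. W (s, t1)) x0 + g x0 * vderiv (\<lambda>s. W (s, t1)) x0)
      + l2 * ((vderiv ^^ 2) (\<lambda>s. W (s, t2)) x0 + g x0 * vderiv (\<lambda>s. W (s, t2)) x0)"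
    by (simp add: algebra_simps)
  also have "\<dots> = 0"
    using slice_fst_ode[OF U st K] inU A(2) by (simp add: g_def)
  finally have "(vderiv ^^ 2) (w n) x0 + g x0 * vderiv (w n) x0 = 0" .
  moreover have "smooth1_on A (w n)"
    using smooth1_on_cong_open[OF A(1) eq] shh by simp
  ultimately show ?thesis
    using A(2) by (intro exI[of _ A] conjI)
qed

lemma powser_coefficient_in_Kalpha_0:
  assumes U: "open U" and st: "star \<Gamma> U 0" and K: "vf u W \<in> KC \<Gamma> U"
    and ser: "\<forall>p\<in>U. (\<lambda>n. w n (fst p) * complex_of_real (snd p) ^ n) sums W p"
  shows "vf (\<lambda>p. 0) (\<lambda>p. w n (fst p)) \<in> Kalpha \<Gamma> U 0"
proof -
  note loc = powser_coefficient_locally_solves_ode[OF U st K ser, where n=n]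
  have "smooth1_on (fst ` U) (w n)"
    by (rule smooth1_on_locally) (use loc in blast)
  then have "smooth_on U (\<lambda>p. w n (fst p))"
    using smooth_on_comp_fst_iff[OF U] by simp
  moreover have "\<forall>p\<in>U. complex_of_real (\<Gamma> 1 2 2 (fst p) + \<Gamma> 2 1 2 (fst p))
      * vector_derivative (w n) (at (fst p))
      + vector_derivative (\<lambda>s. vector_derivative (w n) (at s)) (at (fst p)) = 0"
    using loc by (force simp: vderiv_def numeral_2_eq_2 algebra_simps)
  ultimately show ?thesis
    by (intro Kalpha_iff_ode[OF U st, THEN iffD2] exI[of _ "w n"]) (simp add: vf_def)
qed

lemma x2_partial_2_in_KR:
  assumes U: "open U" and st: "star \<Gamma> U 0"
  shows "vf (\<lambda>p. 0) (\<lambda>p. complex_of_real (snd p)) \<in> KR \<Gamma> U"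
proof -
  let ?X = "vf (\<lambda>p. 0) (\<lambda>p. complex_of_real (snd p))"
  have X: "\<forall>q\<in>U. ?X 1 q = 0 \<and> ?X 2 q = complex_of_real (snd q) * (\<lambda>_. 1) (fst q)"
    by (simp add: vf_def)
  have "smooth_on U (\<lambda>q. complex_of_real (snd q) * (\<lambda>_. 1) (fst q))"
    by (rule smooth_on_separable[OF U smooth1_on_of_real smooth1_on_const])
  then have smooth: "smooth_on U (?X 1)" "smooth_on U (?X 2)"
    using smooth_on_zero[OF U] by (simp_all add: vf_def)
  have d: "vderiv complex_of_real (snd p) = 1" "(vderiv ^^ 2) complex_of_real (snd p) = 0"
    "vderiv (\<lambda>_. 1 :: complex) (fst p) = 0" "(vderiv ^^ 2) (\<lambda>_. 1 :: complex) (fst p) = 0" for p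
    using vderiv_funpow_const[of 0 "1 :: complex"] vderiv_funpow_const[of 1 "1 :: complex"]
    by (simp_all add: vderiv_of_real numeral_2_eq_2 del: funpow.simps)
      (simp_all add: vderiv_def)
  have "\<forall>i\<in>{1, 2}. \<forall>j\<in>{1, 2}. \<forall>k\<in>{1, 2}. killing_op \<Gamma> ?X p i j k = 0" if p: "p \<in> U" for p
  proof -
    have G: "Gc \<Gamma> 1 1 1 p = 0" "Gc \<Gamma> 1 1 2 p = 0" "Gc \<Gamma> 1 2 1 p = 0" "Gc \<Gamma> 2 1 1 p = 0"
      "Gc \<Gamma> 2 2 1 p = 0" "Gc \<Gamma> 2 2 2 p = 0"
      using st p unfolding star_def by (simp_all add: Gc_def)
    show ?thesis
      unfolding ball_index_triples
        killing_op_vertical_separable[OF U smooth1_on_of_real smooth1_on_const X p] d G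
      by simp
  qed
  then show ?thesis
    using smooth by (simp add: KR_def KC_iff_killing_op vf_def)
qed

theorem lemma3p2:
  fixes \<Gamma> :: "nat \<Rightarrow> nat \<Rightarrow> nat \<Rightarrow> real \<Rightarrow> real"
    and U :: "(real \<times> real) set"
  assumes "open U" and "connected U"
    and "\<forall>i\<in>{1, 2}. \<forall>j\<in>{1, 2}. \<forall>k\<in>{1, 2}. smooth_on U (Gc \<Gamma> i j k)"
    and "\<forall>p\<in>U. \<Gamma> 1 1 1 (fst p) = 0"
    and "\<forall>p\<in>U. \<Gamma> 1 1 2 (fst p) = 0"
  shows
    "(\<forall>\<alpha> X. X \<in> Kalpha \<Gamma> U \<alpha> \<and> \<not> (\<exists>c. \<forall>p\<in>U. X 1 p = 0 \<and> X 2 p = c)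
        \<longrightarrow> star \<Gamma> U \<alpha>)
     \<and> (\<forall>\<alpha>. star \<Gamma> U \<alpha> \<longrightarrow>
         (\<forall>u w. vf u w \<in> KC \<Gamma> U \<longrightarrow>
             (\<forall>p\<in>U. \<alpha> * pd 2 u p + pd 2 (pd 2 u) p = 0) \<and>
             (\<forall>p\<in>U. (Gc \<Gamma> 1 2 2 p + Gc \<Gamma> 2 1 2 p) * pd 1 w p + pd 1 (pd 1 w) p = 0))
       \<and> (\<forall>X. X \<in> Kalpha \<Gamma> U \<alpha> \<longleftrightarrow>
             (\<exists>v :: real \<Rightarrow> complex. smooth_on U (\<lambda>p. v (fst p)) \<and>
                (\<forall>p\<in>U. X 1 p = 0 \<and> X 2 p = exp (\<alpha> * complex_of_real (snd p)) * v (fst p)) \<and>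
                (\<forall>p\<in>U. complex_of_real (\<Gamma> 1 2 2 (fst p) + \<Gamma> 2 1 2 (fst p))
                           * vector_derivative v (at (fst p))
                         + vector_derivative (\<lambda>s. vector_derivative v (at s)) (at (fst p)) = 0)))
       \<and> (\<alpha> = 0 \<longrightarrow>
           (\<forall>u W (w :: nat \<Rightarrow> real \<Rightarrow> complex).
               vf u W \<in> KC \<Gamma> U
               \<and> (\<forall>p\<in>U. (\<lambda>n. w n (fst p) * complex_of_real (snd p) ^ n) sums W p)
               \<longrightarrow> (\<forall>n. vf (\<lambda>p. 0) (\<lambda>p. w n (fst p)) \<in> Kalpha \<Gamma> U 0))
           \<and> vf (\<lambda>p. 0) (\<lambda>p. complex_of_real (snd p)) \<in> KR \<Gamma> U))"
  apply (intro conjI allI impI)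
  subgoal
    using star_if_Kalpha_nonconstant[OF assms] by blast
  subgoal
    using killing_eqs_vf_under_star(1)[OF assms(1)] by blast
  subgoal
    using killing_eqs_vf_under_star(2)[OF assms(1)] by blast
  subgoal
    by (rule Kalpha_iff_ode[OF assms(1)])
  subgoal
    using powser_coefficient_in_Kalpha_0[OF assms(1)] by blast
  subgoal
    using x2_partial_2_in_KR[OF assms(1)] by blast
  done

end
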